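(* Consider a cellular network with $n$ base stations $\mathcal{N}=\{1,\dots,n\}$, base station $i$ serving a nonempty set $\mathcal{J}_i$ of users (pairwise disjoint), channel gains $g_{kj}>0$, noise power $\sigma^2>0$, and $$f_i(\mathbf{x};\mathbf{r},\mathbf{p})=\sum_{j\in\mathcal{J}_i}\frac{r_{ij}}{\log\Big(1+\frac{p_i g_{ij}}{\sum_{k\ne i} p_k g_{kj} x_k+\sigma^2}\Big)}.$$ Let $\mathbf{d}_{\min}>\mathbf{0}$ and consider Problem P0: $$\min_{\mathbf{p}>\mathbf{0},\ \mathbf{r}>\mathbf{0},\ \mathbf{0}<\mathbf{x}\le\mathbf{1}} \mathbf{x}^T\mathbf{p}\quad\text{s.t.}\quad \mathbf{x}=\mathbf{f}(\mathbf{x};\mathbf{r},\mathbf{p}),\quad \mathbf{r}\ge\mathbf{d}_{\min}.$$ Then the optimal rate vector of Problem P0 satisfies $\mathbf{r}^\star=\mathbf{d}_{\min}$.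
   Context: Vector inequalities are componentwise; $\log$ is natural logarithm. *)

theory Defs
  imports Complex_Main
begin

text \<open>Base stations are indexed by {1..n}; users have an arbitrary type 'u;
  J i is the set of users served by base station i. Vectors x, p are functions
  nat => real (only the entries in {1..n} matter); the rate vector r and the
  demand vector dmin are indexed by pairs (i, j) with j in J i.\<close>

definition load_fun ::
  "nat \<Rightarrow> (nat \<Rightarrow> 'u set) \<Rightarrow> (nat \<Rightarrow> 'u \<Rightarrow> real) \<Rightarrow> real \<Rightarrow>
   (nat \<Rightarrow> real) \<Rightarrow> (nat \<Rightarrow> 'u \<Rightarrow> real) \<Rightarrow> (nat \<Rightarrow> real) \<Rightarrow> nat \<Rightarrow> real" where
  "load_fun n J g \<sigma>2 x r p i =
     (\<Sum>j\<in>J i. r i j /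
        ln (1 + p i * g i j / ((\<Sum>k\<in>{1..n} - {i}. p k * g k j * x k) + \<sigma>2)))"

definition P0_feasible ::
  "nat \<Rightarrow> (nat \<Rightarrow> 'u set) \<Rightarrow> (nat \<Rightarrow> 'u \<Rightarrow> real) \<Rightarrow> real \<Rightarrow> (nat \<Rightarrow> 'u \<Rightarrow> real) \<Rightarrow>
   (nat \<Rightarrow> real) \<Rightarrow> (nat \<Rightarrow> 'u \<Rightarrow> real) \<Rightarrow> (nat \<Rightarrow> real) \<Rightarrow> bool" where
  "P0_feasible n J g \<sigma>2 dmin x r p \<longleftrightarrow>
     (\<forall>i\<in>{1..n}. 0 < p i \<and> 0 < x i \<and> x i \<le> 1 \<and> x i = load_fun n J g \<sigma>2 x r p i) \<and>
     (\<forall>i\<in>{1..n}. \<forall>j\<in>J i. 0 < r i j \<and> dmin i j \<le> r i j)"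

definition P0_cost :: "nat \<Rightarrow> (nat \<Rightarrow> real) \<Rightarrow> (nat \<Rightarrow> real) \<Rightarrow> real" where
  "P0_cost n x p = (\<Sum>i\<in>{1..n}. x i * p i)"

definition P0_optimal ::
  "nat \<Rightarrow> (nat \<Rightarrow> 'u set) \<Rightarrow> (nat \<Rightarrow> 'u \<Rightarrow> real) \<Rightarrow> real \<Rightarrow> (nat \<Rightarrow> 'u \<Rightarrow> real) \<Rightarrow>
   (nat \<Rightarrow> real) \<Rightarrow> (nat \<Rightarrow> 'u \<Rightarrow> real) \<Rightarrow> (nat \<Rightarrow> real) \<Rightarrow> bool" where
  "P0_optimal n J g \<sigma>2 dmin x r p \<longleftrightarrow>
     P0_feasible n J g \<sigma>2 dmin x r p \<and>
     (\<forall>x' r' p'. P0_feasible n J g \<sigma>2 dmin x' r' p' \<longrightarrow> P0_cost n x p \<le> P0_cost n x' p')"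

end

theory Submission
  imports Defs
begin

text \<open>If some user i, j0 received more than its demand, lower the load of base station i by
  a small \<delta> and take the spare rate from that user. The other users of i keep their
  rate, and every other base station only sees less interference, so its users can scale their
  rates up by the gain in spectral efficiency while keeping the load fixed. The result is
  feasible and cheaper by \<delta> p i, contradicting optimality.\<close>

definition spectral_eff ::
  "nat \<Rightarrow> (nat \<Rightarrow> 'u \<Rightarrow> real) \<Rightarrow> real \<Rightarrow> (nat \<Rightarrow> real) \<Rightarrow> (nat \<Rightarrow> real) \<Rightarrow> nat \<Rightarrow> 'u \<Rightarrow> real" where
  "spectral_eff n g \<sigma>2 x p i j =
     ln (1 + p i * g i j / ((\<Sum>k\<in>{1..n} - {i}. p k * g k j * x k) + \<sigma>2))"

lemma load_fun_eq_spectral_eff: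
  "load_fun n J g \<sigma>2 x r p i = (\<Sum>j\<in>J i. r i j / spectral_eff n g \<sigma>2 x p i j)"
  unfolding load_fun_def spectral_eff_def ..

lemma spectral_eff_pos:
  assumes "0 < p i * g i j" and "0 < \<sigma>2"
    and "\<forall>k\<in>{1..n} - {i}. 0 \<le> p k * g k j * x k"
  shows "0 < spectral_eff n g \<sigma>2 x p i j"
proof -
  have "0 \<le> (\<Sum>k\<in>{1..n} - {i}. p k * g k j * x k)"
    using assms(3) by (intro sum_nonneg) blast
  then show ?thesis
    unfolding spectral_eff_def using assms(1,2) by (simp add: ln_gt_zero)
qed

lemma spectral_eff_antimono:
  assumes "0 < p i * g i j" and "0 < \<sigma>2"
    and "\<forall>k\<in>{1..n} - {i}. 0 \<le> p k * g k j \<and> 0 \<le> x' k \<and> x' k \<le> x k"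
  shows "spectral_eff n g \<sigma>2 x p i j \<le> spectral_eff n g \<sigma>2 x' p i j"
proof -
  let ?I = "\<lambda>y. (\<Sum>k\<in>{1..n} - {i}. p k * g k j * y k)"
  have "0 \<le> ?I x'"
    using assms(3) by (intro sum_nonneg) simp
  moreover have "?I x' \<le> ?I x"
    using assms(3) by (intro sum_mono mult_left_mono) auto
  ultimately have "p i * g i j / (?I x + \<sigma>2) \<le> p i * g i j / (?I x' + \<sigma>2)"
    using assms(1,2) by (intro frac_le) auto
  moreover have "0 < p i * g i j / (?I x' + \<sigma>2)" "0 < p i * g i j / (?I x + \<sigma>2)"
    using \<open>0 \<le> ?I x'\<close> \<open>?I x' \<le> ?I x\<close> assms(1,2) by auto
  ultimately show ?thesis
    unfolding spectral_eff_def by simp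
qed

lemma spectral_eff_upd_own:
  "spectral_eff n g \<sigma>2 (x(i := a)) p i j = spectral_eff n g \<sigma>2 x p i j"
  unfolding spectral_eff_def by (intro arg_cong[where f = ln] sum.cong) auto

lemma P0_cost_upd:
  assumes "i \<in> {1..n}"
  shows "P0_cost n (x(i := x i - \<delta>)) p = P0_cost n x p - \<delta> * p i"
proof -
  have "P0_cost n (x(i := x i - \<delta>)) p = (\<Sum>k\<in>{1..n}. x k * p k - (if k = i then \<delta> * p i else 0))"
    unfolding P0_cost_def by (intro sum.cong) (auto simp: algebra_simps)
  also have "\<dots> = P0_cost n x p - \<delta> * p i"
    unfolding P0_cost_def sum_subtractf using assms by simp
  finally show ?thesis .
qed

lemma P0_feasible_reduce_load:
  fixes n :: nat and g :: "nat \<Rightarrow> 'u \<Rightarrow> real" and \<sigma>2 \<delta> :: real and x p :: "nat \<Rightarrow> real" and i :: nat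
  defines "L \<equiv> spectral_eff n g \<sigma>2 x p"
    and "x' \<equiv> x(i := x i - \<delta>)"
  defines "L' \<equiv> spectral_eff n g \<sigma>2 x' p"
  assumes feas: "P0_feasible n J g \<sigma>2 dmin x r p"
    and J_fin: "finite (J i)"
    and g_pos: "\<forall>k\<in>{1..n}. \<forall>i\<in>{1..n}. \<forall>j\<in>J i. 0 < g k j"
    and sigma_pos: "0 < \<sigma>2"
    and i: "i \<in> {1..n}" and j0: "j0 \<in> J i" and dmin_pos: "0 < dmin i j0"
    and \<delta>: "0 \<le> \<delta>" "\<delta> < x i" "\<delta> * L i j0 \<le> r i j0 - dmin i j0"
  shows "P0_feasible n J g \<sigma>2 dmin x'
           (\<lambda>k j. if k = i \<and> j = j0 then r i j0 - \<delta> * L i j0 else r k j * L' k j / L k j) p"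
    (is "P0_feasible _ _ _ _ _ _ ?r' _")
proof -
  have p_pos: "\<And>k. k \<in> {1..n} \<Longrightarrow> 0 < p k" and x_pos: "\<And>k. k \<in> {1..n} \<Longrightarrow> 0 < x k"
    and x_le_1: "\<And>k. k \<in> {1..n} \<Longrightarrow> x k \<le> 1"
    and x_fix: "\<And>k. k \<in> {1..n} \<Longrightarrow> x k = (\<Sum>j\<in>J k. r k j / L k j)"
    and r_pos: "\<And>k j. k \<in> {1..n} \<Longrightarrow> j \<in> J k \<Longrightarrow> 0 < r k j"
    and r_ge: "\<And>k j. k \<in> {1..n} \<Longrightarrow> j \<in> J k \<Longrightarrow> dmin k j \<le> r k j"
    using feas unfolding P0_feasible_def L_def load_fun_eq_spectral_eff by blast+
  have x'_pos: "\<And>k. k \<in> {1..n} \<Longrightarrow> 0 < x' k" and x'_le: "\<And>k. x' k \<le> x k"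
    using x_pos \<delta> unfolding x'_def by auto
  have L_pos: "0 < L k j" and L'_pos: "0 < L' k j" and L_le: "L k j \<le> L' k j"
    if k: "k \<in> {1..n}" and j: "j \<in> J k" for k j
  proof -
    have pg: "0 < p k * g k j" and pg': "\<And>k'. k' \<in> {1..n} \<Longrightarrow> 0 \<le> p k' * g k' j"
      using p_pos g_pos k j by (auto intro!: mult_nonneg_nonneg less_imp_le)
    show "0 < L k j"
      unfolding L_def using pg sigma_pos
      by (rule spectral_eff_pos) (use pg' x_pos in \<open>force intro: mult_nonneg_nonneg less_imp_le\<close>)
    show "0 < L' k j"
      unfolding L'_def using pg sigma_pos
      by (rule spectral_eff_pos) (use pg' x'_pos in \<open>force intro: mult_nonneg_nonneg less_imp_le\<close>)
    show "L k j \<le> L' k j"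
      unfolding L_def L'_def using pg sigma_pos
      by (rule spectral_eff_antimono) (use pg' x'_pos x'_le in \<open>auto intro!: less_imp_le\<close>)
  qed
  have L'_i: "\<And>j. L' i j = L i j"
    unfolding L_def L'_def x'_def by (rule spectral_eff_upd_own)
  have load_i: "(\<Sum>j\<in>J i. ?r' i j / L' i j) = x' i"
  proof -
    have "(\<Sum>j\<in>J i. ?r' i j / L' i j) = ?r' i j0 / L i j0 + (\<Sum>j\<in>J i - {j0}. r i j / L i j)"
      using J_fin j0 L_pos[OF i] L'_i by (simp add: sum.remove) (intro sum.cong; simp)
    also have "\<dots> = (\<Sum>j\<in>J i. r i j / L i j) - \<delta>"
      using J_fin j0 L_pos[OF i j0] by (simp add: sum.remove field_simps)
    finally show ?thesis
      using x_fix[OF i] unfolding x'_def by simp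
  qed
  have load_k: "(\<Sum>j\<in>J k. ?r' k j / L' k j) = x' k" if k: "k \<in> {1..n}" "k \<noteq> i" for k
  proof -
    have "(\<Sum>j\<in>J k. ?r' k j / L' k j) = (\<Sum>j\<in>J k. r k j / L k j)"
    proof (rule sum.cong)
      fix j assume "j \<in> J k"
      then have "0 < L' k j" by (rule L'_pos[OF k(1)])
      then show "?r' k j / L' k j = r k j / L k j"
        using k(2) by simp
    qed simp
    then show ?thesis
      using x_fix[OF k(1)] k(2) unfolding x'_def by simp
  qed
  have r'_ge: "dmin k j \<le> ?r' k j" if k: "k \<in> {1..n}" and j: "j \<in> J k" for k j
  proof (cases "k = i \<and> j = j0")
    case False
    have "r k j \<le> r k j * L' k j / L k j"
      using L_pos[OF k j] L_le[OF k j] r_pos[OF k j] by (simp add: field_simps)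
    then show ?thesis using False r_ge[OF k j] by auto
  qed (use \<delta>(3) in auto)
  have r'_pos: "0 < ?r' k j" if k: "k \<in> {1..n}" and j: "j \<in> J k" for k j
  proof (cases "k = i \<and> j = j0")
    case True
    then show ?thesis using r'_ge[OF k j] dmin_pos by simp
  next
    case False
    then show ?thesis using r_pos[OF k j] L_pos[OF k j] L'_pos[OF k j] by auto
  qed
  show ?thesis
    unfolding P0_feasible_def load_fun_eq_spectral_eff L'_def[symmetric]
  proof (intro conjI ballI)
    fix k assume k: "k \<in> {1..n}"
    show "0 < p k" "0 < x' k" using p_pos[OF k] x'_pos[OF k] .
    show "x' k \<le> 1" using x'_le[of k] x_le_1[OF k] by simp
    show "x' k = (\<Sum>j\<in>J k. ?r' k j / L' k j)"
    proof (cases "k = i")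
      case True
      show ?thesis unfolding True using load_i by simp
    qed (use load_k[OF k] in simp)
  next
    fix k j assume "k \<in> {1..n}" "j \<in> J k"
    then show "0 < ?r' k j" "dmin k j \<le> ?r' k j" by (rule r'_pos, rule r'_ge)
  qed
qed

lemma P0_cheaper_feasible_if_rate_slack:
  assumes feas: "P0_feasible n J g \<sigma>2 dmin x r p"
    and J_fin: "finite (J i)"
    and g_pos: "\<forall>k\<in>{1..n}. \<forall>i\<in>{1..n}. \<forall>j\<in>J i. 0 < g k j"
    and sigma_pos: "0 < \<sigma>2"
    and i: "i \<in> {1..n}" and j0: "j0 \<in> J i" and dmin_pos: "0 < dmin i j0"
    and slack: "dmin i j0 < r i j0"
  shows "\<exists>x' r'. P0_feasible n J g \<sigma>2 dmin x' r' p \<and> P0_cost n x' p < P0_cost n x p"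
proof -
  define L0 where "L0 = spectral_eff n g \<sigma>2 x p i j0"
  have p_pos: "\<And>k. k \<in> {1..n} \<Longrightarrow> 0 < p k" and x_pos: "\<And>k. k \<in> {1..n} \<Longrightarrow> 0 < x k"
    using feas unfolding P0_feasible_def by blast+
  have "0 < p i * g i j0"
    using p_pos[OF i] g_pos i j0 by simp
  then have "0 < L0"
    unfolding L0_def using sigma_pos
    by (rule spectral_eff_pos) (use p_pos x_pos g_pos i j0 in \<open>auto intro!: less_imp_le\<close>)
  define \<delta> where "\<delta> = min (x i / 2) ((r i j0 - dmin i j0) / L0)"
  have "0 < \<delta>" "\<delta> < x i" "\<delta> * L0 \<le> r i j0 - dmin i j0"
    unfolding \<delta>_def using x_pos[OF i] slack \<open>0 < L0\<close> by (auto simp: min_def field_simps)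
  with P0_feasible_reduce_load[OF feas J_fin g_pos sigma_pos i j0 dmin_pos, of \<delta>]
    P0_cost_upd[OF i, of x \<delta> p] p_pos[OF i]
  show ?thesis unfolding L0_def by fastforce
qed

theorem lemma7:
  fixes n :: nat and J :: "nat \<Rightarrow> 'u set" and g :: "nat \<Rightarrow> 'u \<Rightarrow> real"
    and \<sigma>2 :: real and dmin r :: "nat \<Rightarrow> 'u \<Rightarrow> real" and x p :: "nat \<Rightarrow> real"
  assumes J_fin: "\<forall>i\<in>{1..n}. finite (J i)"
    and J_ne: "\<forall>i\<in>{1..n}. J i \<noteq> {}"
    and J_disj: "\<forall>i\<in>{1..n}. \<forall>i'\<in>{1..n}. i \<noteq> i' \<longrightarrow> J i \<inter> J i' = {}"
    and g_pos: "\<forall>k\<in>{1..n}. \<forall>i\<in>{1..n}. \<forall>j\<in>J i. 0 < g k j"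
    and sigma_pos: "0 < \<sigma>2"
    and dmin_pos: "\<forall>i\<in>{1..n}. \<forall>j\<in>J i. 0 < dmin i j"
    and opt: "P0_optimal n J g \<sigma>2 dmin x r p"
  shows "\<forall>i\<in>{1..n}. \<forall>j\<in>J i. r i j = dmin i j"
proof (intro ballI)
  fix i j assume i: "i \<in> {1..n}" and j: "j \<in> J i"
  have feas: "P0_feasible n J g \<sigma>2 dmin x r p"
    and min: "\<And>x' r' p'. P0_feasible n J g \<sigma>2 dmin x' r' p' \<Longrightarrow> P0_cost n x p \<le> P0_cost n x' p'"
    using opt unfolding P0_optimal_def by auto
  have "dmin i j \<le> r i j"
    using feas i j unfolding P0_feasible_def by auto
  moreover have "\<not> dmin i j < r i j"
    using P0_cheaper_feasible_if_rate_slack[OF feas _ g_pos sigma_pos i j] J_fin dmin_pos i j min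
    by (meson not_le)
  ultimately show "r i j = dmin i j" by simp
qed

end
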